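(* For every prime $d$, every $n\ge 1$ and every $n$-qudit state $\rho$, the mean state $\mathcal M(\rho)$ is a minimal stabilizer-projection state (MSPS). More precisely, the set $S=\{\vec x\in V^n:|\Xi_\rho(\vec x)|=1\}$ is a subgroup of $V^n$ of size $d^r$ for some $0\le r\le n$ whose Weyl operators pairwise commute, and $\mathcal M(\rho)=P/d^{n-r}$ where $P$ is a minimal projection in the C*-algebra generated by $\{w(\vec x):\vec x\in S\}$.
   Context: Fix a prime $d$ and $n\ge1$. Let $\mathcal H=\mathbb C^d$ with computational basis $\{|k\rangle\}_{k\in\mathbb Z_d}$, $\chi(k)=e^{2\pi i k/d}$, $X|k\rangle=|k+1\rangle$, $Z|k\rangle=\chi(k)|k\rangle$. For $(p,q)\in\mathbb Z_d^2$ the Weyl operator is $w(p,q)=\chi(-2^{-1}pq)Z^pX^q$ if $d$ is odd ($2^{-1}$ the inverse of $2$ mod $d$) and $w(p,q)=i^{-pq}Z^pX^q$ if $d=2$. Let $V^n=\mathbb Z_d^n\times\mathbb Z_d^n$; for $(\vec p,\vec q)\in V^n$ set $w(\vec p,\vec q)=\bigotimes_{k=1}^n w(p_k,q_k)$ on $\mathcal H^{\otimes n}$. A state is a positive semidefinite trace-one operator. The characteristic function of $\rho$ is $\Xi_\rho(\vec p,\vec q)=\mathrm{Tr}[\rho\,w(-\vec p,-\vec q)]$, so that $\rho=d^{-n}\sum_{(\vec p,\vec q)\in V^n}\Xi_\rho(\vec p,\vec q)w(\vec p,\vec q)$. For an abelian group $S$ of Weyl operators (considered up to phases), a minimal projection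 of the C*-algebra $C^*(S)$ generated by $S$ is a minimal stabilizer projection associated with $S$, and a minimal stabilizer-projection state (MSPS) is such a projection divided by its rank. The mean state $\mathcal M(\rho)$ is the operator with characteristic function $\Xi_{\mathcal M(\rho)}(\vec x)=\Xi_\rho(\vec x)$ if $|\Xi_\rho(\vec x)|=1$ and $\Xi_{\mathcal M(\rho)}(\vec x)=0$ otherwise. *)

theory Defs
  imports Complex_Main "HOL-Computational_Algebra.Primes"
begin

text \<open>Operators on the n-qudit space (C^d)^{tensor n} are represented by their matrix
  kernels indexed by computational basis vectors, i.e. lists of length n with
  entries in {0..<d}.\<close>

type_synonym qop = "nat list \<Rightarrow> nat list \<Rightarrow> complex"

definition qbasis :: "nat \<Rightarrow> nat \<Rightarrow> nat list set" where
  "qbasis d n = {xs. length xs = n \<and> set xs \<subseteq> {..<d}}"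

definition is_op :: "nat \<Rightarrow> nat \<Rightarrow> qop \<Rightarrow> bool" where
  "is_op d n A \<longleftrightarrow> (\<forall>x y. (x \<notin> qbasis d n \<or> y \<notin> qbasis d n) \<longrightarrow> A x y = 0)"

definition op_mult :: "nat \<Rightarrow> nat \<Rightarrow> qop \<Rightarrow> qop \<Rightarrow> qop" where
  "op_mult d n A B = (\<lambda>x y. if x \<in> qbasis d n \<and> y \<in> qbasis d n
      then (\<Sum>z\<in>qbasis d n. A x z * B z y) else 0)"

definition op_add :: "qop \<Rightarrow> qop \<Rightarrow> qop" where
  "op_add A B = (\<lambda>x y. A x y + B x y)"

definition op_smult :: "complex \<Rightarrow> qop \<Rightarrow> qop" where
  "op_smult c A = (\<lambda>x y. c * A x y)"

definition op_adj :: "qop \<Rightarrow> qop" where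
  "op_adj A = (\<lambda>x y. cnj (A y x))"

definition op_trace :: "nat \<Rightarrow> nat \<Rightarrow> qop \<Rightarrow> complex" where
  "op_trace d n A = (\<Sum>x\<in>qbasis d n. A x x)"

definition is_state :: "nat \<Rightarrow> nat \<Rightarrow> qop \<Rightarrow> bool" where
  "is_state d n \<rho> \<longleftrightarrow> is_op d n \<rho> \<and> op_adj \<rho> = \<rho> \<and>
     (\<forall>v :: nat list \<Rightarrow> complex.
        0 \<le> Re (\<Sum>x\<in>qbasis d n. \<Sum>y\<in>qbasis d n. cnj (v x) * \<rho> x y * v y)) \<and>
     op_trace d n \<rho> = 1"

definition chi :: "nat \<Rightarrow> int \<Rightarrow> complex" where
  "chi d k = exp (2 * complex_of_real pi * \<i> * of_int k / of_nat d)"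

text \<open>Phase of the Weyl operator w(p,q), p q in {0..<d}: chi(-2^{-1} p q) for odd d
  (2^{-1} = (d+1)/2 mod d), and i^{-pq} for d = 2.\<close>
definition wphase :: "nat \<Rightarrow> nat \<Rightarrow> nat \<Rightarrow> complex" where
  "wphase d p q = (if d = 2 then inverse (\<i> ^ (p * q))
                   else chi d (- int ((d + 1) div 2) * int p * int q))"

text \<open>Matrix entry <j| w(p,q) |k> where w(p,q) = phase * Z^p X^q,
  X|k> = |k+1>, Z|k> = chi(k)|k>; so Z^p X^q |k> = chi(p (k+q)) |k+q>.\<close>
definition weyl1 :: "nat \<Rightarrow> nat \<Rightarrow> nat \<Rightarrow> nat \<Rightarrow> nat \<Rightarrow> complex" where
  "weyl1 d p q j k = wphase d p q * (if j = (k + q) mod d then chi d (int (p * j)) else 0)"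

definition Vn :: "nat \<Rightarrow> nat \<Rightarrow> (nat list \<times> nat list) set" where
  "Vn d n = qbasis d n \<times> qbasis d n"

definition vadd :: "nat \<Rightarrow> nat list \<times> nat list \<Rightarrow> nat list \<times> nat list \<Rightarrow> nat list \<times> nat list" where
  "vadd d u v = (map2 (\<lambda>a b. (a + b) mod d) (fst u) (fst v),
                 map2 (\<lambda>a b. (a + b) mod d) (snd u) (snd v))"

definition vneg :: "nat \<Rightarrow> nat list \<times> nat list \<Rightarrow> nat list \<times> nat list" where
  "vneg d u = (map (\<lambda>a. (d - a) mod d) (fst u), map (\<lambda>a. (d - a) mod d) (snd u))"

definition vzero :: "nat \<Rightarrow> nat list \<times> nat list" where
  "vzero n = (replicate n 0, replicate n 0)"

definition weyl :: "nat \<Rightarrow> nat \<Rightarrow> nat list \<times> nat list \<Rightarrow> qop" where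
  "weyl d n v = (\<lambda>xs ys. if xs \<in> qbasis d n \<and> ys \<in> qbasis d n
      then (\<Prod>k<n. weyl1 d (fst v ! k) (snd v ! k) (xs ! k) (ys ! k)) else 0)"

definition charfun :: "nat \<Rightarrow> nat \<Rightarrow> qop \<Rightarrow> nat list \<times> nat list \<Rightarrow> complex" where
  "charfun d n \<rho> v = op_trace d n (op_mult d n \<rho> (weyl d n (vneg d v)))"

text \<open>Mean state: the operator whose characteristic function equals Xi_rho where
  |Xi_rho| = 1 and 0 elsewhere, written via the inversion formula
  rho = d^{-n} sum_x Xi_rho(x) w(x).\<close>
definition mean_state :: "nat \<Rightarrow> nat \<Rightarrow> qop \<Rightarrow> qop" where
  "mean_state d n \<rho> = (\<lambda>xs ys. (1 / of_nat d ^ n) *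
      (\<Sum>v\<in>{v \<in> Vn d n. cmod (charfun d n \<rho> v) = 1}. charfun d n \<rho> v * weyl d n v xs ys))"

text \<open>C*-algebra generated by a set of operators (finite dimension: the *-algebra
  generated; norm closure is automatic).\<close>
inductive_set cstar_gen :: "nat \<Rightarrow> nat \<Rightarrow> qop set \<Rightarrow> qop set" for d n G where
  gen: "A \<in> G \<Longrightarrow> A \<in> cstar_gen d n G"
| add: "A \<in> cstar_gen d n G \<Longrightarrow> B \<in> cstar_gen d n G \<Longrightarrow> op_add A B \<in> cstar_gen d n G"
| smult: "A \<in> cstar_gen d n G \<Longrightarrow> op_smult c A \<in> cstar_gen d n G"
| mult: "A \<in> cstar_gen d n G \<Longrightarrow> B \<in> cstar_gen d n G \<Longrightarrow> op_mult d n A B \<in> cstar_gen d n G"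
| adj: "A \<in> cstar_gen d n G \<Longrightarrow> op_adj A \<in> cstar_gen d n G"

definition is_projection :: "nat \<Rightarrow> nat \<Rightarrow> qop \<Rightarrow> bool" where
  "is_projection d n P \<longleftrightarrow> is_op d n P \<and> op_adj P = P \<and> op_mult d n P P = P"

definition minimal_projection :: "nat \<Rightarrow> nat \<Rightarrow> qop set \<Rightarrow> qop \<Rightarrow> bool" where
  "minimal_projection d n Alg P \<longleftrightarrow> P \<in> Alg \<and> is_projection d n P \<and> P \<noteq> (\<lambda>x y. 0) \<and>
     (\<forall>Q\<in>Alg. is_projection d n Q \<and> op_mult d n P Q = Q \<longrightarrow> Q = (\<lambda>x y. 0) \<or> Q = P)"

end

theory Submission
  imports Defs "HOL-Algebra.Coset" "HOL-Analysis.Convex"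
begin

text \<open>
  If a state \<open>\<rho>\<close> and a unitary \<open>U\<close> satisfy \<open>|Tr(\<rho> U)| = 1\<close>, then positivity of \<open>\<rho>\<close> forces
  \<open>\<rho> U = Tr(\<rho> U) \<rho>\<close> (the equality case of Cauchy--Schwarz).
  For the Weyl operators with \<open>|\<Xi>\<^sub>\<rho>| = 1\<close> this turns \<open>\<lambda>(x) = Tr(\<rho> w(x))\<close> into a character
  twisted by the Weyl cocycle; consequently \<open>S\<close> is a subgroup, its Weyl operators commute,
  and the rephased operators \<open>g(x) = \<lambda>(x)\<^sup>* w(x)\<close> form a unitary representation of \<open>S\<close>.
  Their average \<open>P = |S|\<^sup>-\<^sup>1 \<Sigma> g(x)\<close> is a projection, every element of \<open>C\<^sup>*(S)\<close> is a
  combination \<open>\<Sigma> f(x) g(x)\<close> on which \<open>P\<close> acts by the scalar \<open>\<Sigma> f(x)\<close>, so \<open>P\<close> is minimal, and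
  the mean state is \<open>d\<^sup>-\<^sup>n \<Sigma> \<lambda>(x)\<^sup>* w(x) = P |S| / d\<^sup>n\<close>. Finally \<open>|S| = d\<^sup>r\<close> by Lagrange, and
  \<open>1 \<le> Tr P = d\<^sup>n / |S|\<close> gives \<open>r \<le> n\<close>.
\<close>

section \<open>Computational basis and phase space\<close>

lemma qbasis_iff: "xs \<in> qbasis d n \<longleftrightarrow> length xs = n \<and> (\<forall>k<n. xs ! k < d)"
  unfolding qbasis_def by (auto simp: in_set_conv_nth subset_iff)

lemma finite_qbasis [simp]: "finite (qbasis d n)"
proof -
  have "qbasis d n = {xs. set xs \<subseteq> {..<d} \<and> length xs = n}"
    unfolding qbasis_def by auto
  then show ?thesis by (simp add: finite_lists_length_eq)
qed

lemma card_qbasis: "card (qbasis d n) = d ^ n"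
proof -
  have "qbasis d n = {xs. set xs \<subseteq> {..<d} \<and> length xs = n}"
    unfolding qbasis_def by auto
  then show ?thesis using card_lists_length_eq[of "{..<d}" n] by simp
qed

lemma qbasis_Suc: "qbasis d (Suc n) = (\<lambda>(j, zs). j # zs) ` ({..<d} \<times> qbasis d n)"
proof
  show "qbasis d (Suc n) \<subseteq> (\<lambda>(j, zs). j # zs) ` ({..<d} \<times> qbasis d n)"
  proof
    fix xs assume "xs \<in> qbasis d (Suc n)"
    then obtain j zs where "xs = j # zs" "j < d" "zs \<in> qbasis d n"
      by (cases xs) (auto simp: qbasis_def)
    then show "xs \<in> (\<lambda>(j, zs). j # zs) ` ({..<d} \<times> qbasis d n)" by force
  qed
qed (auto simp: qbasis_def)

lemma sum_qbasis_prod: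
  "(\<Sum>z\<in>qbasis d n. \<Prod>k<n. f k (z ! k)) = (\<Prod>k<n. \<Sum>j<d. (f k j :: complex))"
proof (induction n arbitrary: f)
  case 0
  have "qbasis d 0 = {[]}" by (auto simp: qbasis_def)
  then show ?case by simp
next
  case (Suc n)
  have inj: "inj_on (\<lambda>(j, zs). j # zs) ({..<d} \<times> qbasis d n)" by (auto simp: inj_on_def)
  have "(\<Sum>z\<in>qbasis d (Suc n). \<Prod>k<Suc n. f k (z ! k))
      = (\<Sum>(j, zs)\<in>{..<d} \<times> qbasis d n. \<Prod>k<Suc n. f k ((j # zs) ! k))"
    unfolding qbasis_Suc by (subst sum.reindex[OF inj]) (simp add: case_prod_beta')
  also have "\<dots> = (\<Sum>(j, zs)\<in>{..<d} \<times> qbasis d n. f 0 j * (\<Prod>k<n. f (Suc k) (zs ! k)))"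
    by (intro sum.cong refl)
      (auto simp del: lessThan_Suc prod.lessThan_Suc simp: prod.lessThan_Suc_shift)
  also have "\<dots> = (\<Sum>j<d. \<Sum>zs\<in>qbasis d n. f 0 j * (\<Prod>k<n. f (Suc k) (zs ! k)))"
    by (rule sum.cartesian_product[symmetric])
  also have "\<dots> = (\<Sum>j<d. f 0 j) * (\<Prod>k<n. \<Sum>j<d. f (Suc k) j)"
    by (simp add: sum_distrib_left[symmetric] sum_distrib_right Suc.IH[of "\<lambda>k. f (Suc k)"])
  also have "\<dots> = (\<Prod>k<Suc n. \<Sum>j<d. f k j)" by (simp only: prod.lessThan_Suc_shift)
  finally show ?case .
qed

lemma prod_nth_indicator:
  assumes "length x = n" "length y = n"
  shows "(\<Prod>k<n. if x ! k = y ! k then (1::complex) else 0) = (if x = y then 1 else 0)"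
proof (cases "x = y")
  case False
  then obtain k where "k < n" "x ! k \<noteq> y ! k" using assms nth_equalityI by metis
  then have "(\<Prod>k<n. if x ! k = y ! k then (1::complex) else 0) = 0" by (intro prod_zero) auto
  then show ?thesis using False by simp
qed simp

lemma Vn_iff: "u \<in> Vn d n \<longleftrightarrow> length (fst u) = n \<and> length (snd u) = n \<and>
   (\<forall>k<n. fst u ! k < d) \<and> (\<forall>k<n. snd u ! k < d)"
  unfolding Vn_def by (cases u) (auto simp: qbasis_iff)

lemma Vn_nth_less: "u \<in> Vn d n \<Longrightarrow> k < n \<Longrightarrow> fst u ! k < d \<and> snd u ! k < d"
  by (simp add: Vn_iff)

lemma finite_Vn: "finite (Vn d n)"
  unfolding Vn_def by simp

lemma card_Vn: "card (Vn d n) = d ^ (2 * n)"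
  unfolding Vn_def by (simp add: card_cartesian_product card_qbasis power_mult power2_eq_square
      power_mult_distrib)

lemma vadd_Vn: "0 < d \<Longrightarrow> u \<in> Vn d n \<Longrightarrow> v \<in> Vn d n \<Longrightarrow> vadd d u v \<in> Vn d n"
  by (simp add: vadd_def Vn_iff)

lemma vneg_Vn: "0 < d \<Longrightarrow> u \<in> Vn d n \<Longrightarrow> vneg d u \<in> Vn d n"
  by (simp add: vneg_def Vn_iff)

lemma vzero_Vn: "vzero n \<in> Vn d n \<longleftrightarrow> n = 0 \<or> 0 < d"
  by (auto simp: vzero_def Vn_iff)

lemma nth_vadd:
  assumes "u \<in> Vn d n" "v \<in> Vn d n" "k < n"
  shows "fst (vadd d u v) ! k = (fst u ! k + fst v ! k) mod d"
    and "snd (vadd d u v) ! k = (snd u ! k + snd v ! k) mod d"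
  using assms by (simp_all add: vadd_def Vn_iff)

lemma nth_vneg:
  assumes "u \<in> Vn d n" "k < n"
  shows "fst (vneg d u) ! k = (d - fst u ! k) mod d"
    and "snd (vneg d u) ! k = (d - snd u ! k) mod d"
  using assms by (simp_all add: vneg_def Vn_iff)

lemma nth_vzero: "k < n \<Longrightarrow> fst (vzero n) ! k = 0 \<and> snd (vzero n) ! k = 0"
  by (simp add: vzero_def)

lemma vzero_eq_iff:
  "u \<in> Vn d n \<Longrightarrow> u = vzero n \<longleftrightarrow> (\<forall>k<n. fst u ! k = 0 \<and> snd u ! k = 0)"
  by (cases u) (auto simp: vzero_def Vn_iff list_eq_iff_nth_eq)

lemma vadd_comm: "u \<in> Vn d n \<Longrightarrow> v \<in> Vn d n \<Longrightarrow> vadd d u v = vadd d v u"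
  by (simp add: vadd_def Vn_iff list_eq_iff_nth_eq add.commute)

lemma vadd_assoc:
  assumes "u \<in> Vn d n" "v \<in> Vn d n" "w \<in> Vn d n"
  shows "vadd d (vadd d u v) w = vadd d u (vadd d v w)"
  using assms by (simp add: vadd_def Vn_iff list_eq_iff_nth_eq mod_add_left_eq mod_add_right_eq
      add.assoc)

lemma vadd_vzero: "u \<in> Vn d n \<Longrightarrow> vadd d (vzero n) u = u"
  by (cases u) (simp add: vadd_def vzero_def Vn_iff list_eq_iff_nth_eq)

lemma vadd_vneg: "u \<in> Vn d n \<Longrightarrow> vadd d (vneg d u) u = vzero n"
proof -
  have neg_add: "((d - a) mod d + a) mod d = 0" if "a < d" for a
    using that by (cases "a = 0") auto
  assume "u \<in> Vn d n"
  then show ?thesis by (simp add: vadd_def vneg_def vzero_def Vn_iff list_eq_iff_nth_eq neg_add)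
qed

lemma neg_neg_mod: "(a::nat) < d \<Longrightarrow> (d - (d - a) mod d) mod d = a"
  by (cases "a = 0") auto

lemma vneg_vneg: "u \<in> Vn d n \<Longrightarrow> vneg d (vneg d u) = u"
  by (cases u) (simp add: vneg_def Vn_iff list_eq_iff_nth_eq neg_neg_mod)

lemma vadd_vneg_cancel:
  assumes "0 < d" "u \<in> Vn d n" "v \<in> Vn d n"
  shows "vadd d (vneg d u) (vadd d u v) = v"
proof -
  have "vadd d (vneg d u) (vadd d u v) = vadd d (vadd d (vneg d u) u) v"
    using assms by (simp add: vadd_assoc[of _ d n] vneg_Vn)
  then show ?thesis using assms by (simp add: vadd_vneg vadd_vzero)
qed

definition phase_group :: "nat \<Rightarrow> nat \<Rightarrow> (nat list \<times> nat list) monoid" where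
  "phase_group d n = \<lparr>carrier = Vn d n, mult = vadd d, one = vzero n\<rparr>"

lemma group_phase_group: "0 < d \<Longrightarrow> group (phase_group d n)"
  by (rule groupI)
    (auto simp: phase_group_def vadd_Vn vzero_Vn vadd_assoc vadd_vzero intro: vadd_vneg vneg_Vn)

lemma card_phase_subgroup_dvd:
  assumes d: "0 < d" and S: "S \<subseteq> Vn d n" "vzero n \<in> S"
    "\<forall>u\<in>S. \<forall>v\<in>S. vadd d u v \<in> S" "\<forall>u\<in>S. vneg d u \<in> S"
  shows "card S dvd d ^ (2 * n)"
proof -
  interpret group "phase_group d n" using group_phase_group[OF d] .
  have inv: "inv\<^bsub>phase_group d n\<^esub> u = vneg d u" if "u \<in> S" for u
    using S d that by (intro inv_equality) (auto simp: phase_group_def vadd_vneg vneg_Vn)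
  have "subgroup S (phase_group d n)"
    using S inv by (intro subgroupI) (auto simp: phase_group_def)
  from lagrange[OF this] have "card (rcosets\<^bsub>phase_group d n\<^esub> S) * card S = d ^ (2 * n)"
    by (simp add: order_def phase_group_def card_Vn)
  then show ?thesis by (metis dvd_triv_right)
qed

section \<open>The character \<open>\<chi>\<close>\<close>

lemma chi_cis: "chi d k = cis (2 * pi * of_int k / of_nat d)"
  unfolding chi_def cis_conv_exp by (simp add: mult.commute mult.left_commute)

lemma chi_add: "chi d (a + b) = chi d a * chi d b"
  unfolding chi_cis cis_mult by (simp add: ring_distribs add_divide_distrib)

lemma chi_zero [simp]: "chi d 0 = 1"
  by (simp add: chi_cis)

lemma cmod_chi [simp]: "cmod (chi d k) = 1"
  by (simp add: chi_cis)

lemma cnj_chi: "cnj (chi d k) = chi d (- k)"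
  by (simp add: chi_cis cis_cnj)

lemma chi_pow: "chi d (int j * a) = chi d a ^ j"
  by (induction j) (auto simp: ring_distribs chi_add)

lemma chi_multiple: "0 < d \<Longrightarrow> chi d (int d * m) = 1"
proof -
  assume "0 < d"
  then have "2 * pi * of_int (int d * m) / of_nat d = 2 * pi * real_of_int m" by simp
  then show ?thesis unfolding chi_cis by simp
qed

lemma chi_eq_1_imp_dvd: "0 < d \<Longrightarrow> chi d k = 1 \<Longrightarrow> int d dvd k"
proof -
  assume d: "0 < d" and "chi d k = 1"
  then have "cos (2 * pi * of_int k / of_nat d) = 1" unfolding chi_cis by (simp add: complex_eq_iff)
  then obtain m :: int where "2 * pi * of_int k / of_nat d = of_int m * 2 * pi"
    by (subst (asm) cos_one_2pi_int) blast
  then have "real_of_int k = real_of_int (m * int d)" using d by (simp add: field_simps)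
  then have "k = m * int d" by linarith
  then show ?thesis by simp
qed

lemma chi_cong:
  assumes "0 < d" "int d dvd (a - b)"
  shows "chi d a = chi d b"
proof -
  obtain m where "a = b + int d * m" using assms(2) by (metis dvdE diff_add_cancel add.commute)
  then show ?thesis by (simp add: chi_add chi_multiple[OF assms(1)])
qed

lemma chi_mod_eq: "0 < d \<Longrightarrow> a mod int d = b mod int d \<Longrightarrow> chi d a = chi d b"
  by (rule chi_cong) (auto simp: mod_eq_dvd_iff)

lemma chi_mult_mod: "0 < d \<Longrightarrow> chi d (c * (x mod int d)) = chi d (c * x)"
  by (rule chi_mod_eq) (simp_all add: mod_mult_right_eq)

lemma chi_mod_mult: "0 < d \<Longrightarrow> chi d ((x mod int d) * c) = chi d (x * c)"
  by (rule chi_mod_eq) (simp_all add: mod_mult_left_eq)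

lemma sum_chi_multiples:
  assumes d: "0 < d" and "\<not> int d dvd a"
  shows "(\<Sum>j<d. chi d (int j * a)) = 0"
proof -
  let ?z = "chi d a"
  have "?z \<noteq> 1" using chi_eq_1_imp_dvd d assms(2) by blast
  moreover have "?z ^ d = 1" using chi_pow[of d d a] chi_multiple[OF d, of a] by simp
  ultimately show ?thesis by (simp add: chi_pow geometric_sum)
qed

section \<open>Single-qudit Weyl operators\<close>

lemma int_neg_mod: "a \<le> d \<Longrightarrow> int ((d - a) mod d) = (- int a) mod int d"
  by (simp add: of_nat_mod of_nat_diff mod_simps)

lemma cmod_wphase: "cmod (wphase d p q) = 1"
  unfolding wphase_def by (auto simp: norm_power norm_inverse)

lemma wphase_nonzero: "wphase d p q \<noteq> 0"
  using cmod_wphase[of d p q] by auto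

definition weyl1_cocycle :: "nat \<Rightarrow> nat \<Rightarrow> nat \<Rightarrow> nat \<Rightarrow> nat \<Rightarrow> complex" where
  "weyl1_cocycle d a b a' b' =
     wphase d a b * wphase d a' b' * chi d (- (int a' * int b)) / wphase d ((a + a') mod d) ((b + b') mod d)"

lemma weyl1_mult:
  assumes d: "0 < d" and "j < d" "k < d"
  shows "(\<Sum>m<d. weyl1 d a b j m * weyl1 d a' b' m k) =
    weyl1_cocycle d a b a' b' * weyl1 d ((a + a') mod d) ((b + b') mod d) j k"
proof -
  define m0 where "m0 = (k + b') mod d"
  have "m0 < d" using d by (simp add: m0_def)
  moreover have "weyl1 d a b j m * weyl1 d a' b' m k = (if m = m0 then wphase d a b * wphase d a' b' *
      (if j = (m0 + b) mod d then chi d (int (a * j)) * chi d (int (a' * m0)) else 0) else 0)" for m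
    by (simp add: weyl1_def m0_def)
  ultimately have "(\<Sum>m<d. weyl1 d a b j m * weyl1 d a' b' m k) = wphase d a b * wphase d a' b' *
      (if j = (m0 + b) mod d then chi d (int (a * j)) * chi d (int (a' * m0)) else 0)"
    by (simp add: sum.delta)
  also have "\<dots> = weyl1_cocycle d a b a' b' * weyl1 d ((a + a') mod d) ((b + b') mod d) j k"
  proof (cases "j = (m0 + b) mod d")
    case True
    have j: "j = (k + (b + b') mod d) mod d" using True by (simp add: m0_def mod_simps add_ac)
    have J: "int j = (int k + int b + int b') mod int d" using True
      by (simp add: m0_def of_nat_mod mod_simps add_ac)
    have M: "int m0 = (int k + int b') mod int d" by (simp add: m0_def of_nat_mod)
    have "chi d (int (a * j)) * chi d (int (a' * m0))
        = chi d (int a * (int k + int b + int b')) * chi d (int a' * (int k + int b'))"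
      by (simp only: of_nat_mult J M chi_mult_mod[OF d])
    also have "\<dots> = chi d (- (int a' * int b)) * chi d ((int a + int a') * (int k + int b + int b'))"
      unfolding chi_add[symmetric] by (simp add: algebra_simps)
    also have "\<dots> = chi d (- (int a' * int b)) * chi d (int ((a + a') mod d * j))"
      by (simp only: of_nat_mult of_nat_mod J chi_mult_mod[OF d] chi_mod_mult[OF d] of_nat_add)
    finally show ?thesis using True j wphase_nonzero[of d "(a + a') mod d" "(b + b') mod d"]
      by (simp add: weyl1_def weyl1_cocycle_def)
  next
    case False
    then have "j \<noteq> (k + (b + b') mod d) mod d" by (simp add: m0_def mod_simps add_ac)
    with False show ?thesis by (simp add: weyl1_def)
  qed
  finally show ?thesis .
qed

lemma mod_add_eq_iff_mod_add_neg:
  assumes "0 < (d::nat)" "j < d" "k < d" "b < d"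
  shows "k = (j + b) mod d \<longleftrightarrow> j = (k + (d - b) mod d) mod d"
proof
  assume k: "k = (j + b) mod d"
  have "(k + (d - b) mod d) mod d = (j + b + (d - b)) mod d" unfolding k by (rule mod_add_eq)
  also have "\<dots> = j" using assms by simp
  finally show "j = (k + (d - b) mod d) mod d" by simp
next
  assume j: "j = (k + (d - b) mod d) mod d"
  have "(j + b) mod d = (k + (d - b) mod d + b) mod d" unfolding j by (rule mod_add_left_eq)
  also have "\<dots> = ((k + b) + (d - b) mod d) mod d" by (simp only: ac_simps)
  also have "\<dots> = ((k + b) + (d - b)) mod d" by (rule mod_add_right_eq)
  also have "\<dots> = k" using assms by simp
  finally show "k = (j + b) mod d" by simp
qed

lemma mod_add_right_inj: "0 < (d::nat) \<Longrightarrow> j < d \<Longrightarrow> k < d \<Longrightarrow> b < d \<Longrightarrow>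
    (j + b) mod d = (k + b) mod d \<Longrightarrow> j = k"
  using mod_add_eq_iff_mod_add_neg[of d j "(j + b) mod d" b]
    mod_add_eq_iff_mod_add_neg[of d k "(k + b) mod d" b] by simp

lemma mod_mult_mod_mod: "(x * (y mod m) * (z mod m)) mod m = (x * y * z) mod (m::int)"
proof -
  have "(x * (y mod m) * (z mod m)) mod m = (x * (y mod m) * z) mod m" by (rule mod_mult_right_eq)
  also have "\<dots> = ((y mod m) * (x * z)) mod m" by (simp only: ac_simps)
  also have "\<dots> = (y * (x * z)) mod m" by (rule mod_mult_left_eq)
  also have "\<dots> = (x * y * z) mod m" by (simp only: ac_simps)
  finally show ?thesis .
qed

lemma prime_two_or_odd: "prime (d::nat) \<Longrightarrow> d = 2 \<or> odd d"
  using prime_ge_2_nat[of d] prime_odd_nat[of d] by fastforce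

lemma cnj_wphase:
  assumes p: "prime d" and ab: "a < d" "b < d"
  shows "cnj (wphase d a b) * chi d (- (int a * int b)) = wphase d ((d - a) mod d) ((d - b) mod d)"
proof (cases "d = 2")
  case True
  have "chi 2 (-1) = -1" by (simp add: chi_cis complex_eq_iff)
  moreover have "a = 0 \<or> a = 1" "b = 0 \<or> b = 1" using ab True by auto
  ultimately show ?thesis using True by (auto simp: wphase_def)
next
  case False
  then have "odd d" using prime_two_or_odd[OF p] by auto
  define h where "h = (d + 1) div 2"
  have h2: "2 * int h = int d + 1" using \<open>odd d\<close> by (auto simp: h_def elim!: oddE)
  have d0: "0 < d" using p prime_gt_0_nat by blast
  have "cnj (wphase d a b) * chi d (- (int a * int b)) = chi d (int h * int a * int b - int a * int b)"
    using False by (simp add: wphase_def h_def cnj_chi chi_add[symmetric])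
  also have "\<dots> = chi d (- int h * int a * int b)"
  proof (rule chi_cong[OF d0])
    have "int h * int a * int b - int a * int b - (- int h * int a * int b)
        = (2 * int h - 1) * (int a * int b)"
      by (simp add: algebra_simps)
    then show "int d dvd int h * int a * int b - int a * int b - (- int h * int a * int b)"
      using h2 by simp
  qed
  also have "\<dots> = chi d (- int h * int ((d - a) mod d) * int ((d - b) mod d))"
    unfolding int_neg_mod[OF less_imp_le[OF ab(1)]] int_neg_mod[OF less_imp_le[OF ab(2)]]
    by (rule chi_mod_eq[OF d0]) (simp only: mod_mult_mod_mod, simp)
  also have "\<dots> = wphase d ((d - a) mod d) ((d - b) mod d)"
    using False by (simp add: wphase_def h_def)
  finally show ?thesis .
qed

lemma cnj_weyl1:
  assumes p: "prime d" and ab: "a < d" "b < d" and jk: "j < d" "k < d"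
  shows "cnj (weyl1 d a b k j) = weyl1 d ((d - a) mod d) ((d - b) mod d) j k"
proof -
  have d0: "0 < d" using p prime_gt_0_nat by blast
  show ?thesis
  proof (cases "k = (j + b) mod d")
    case True
    then have j: "j = (k + (d - b) mod d) mod d"
      using mod_add_eq_iff_mod_add_neg[OF d0 jk(1) jk(2) ab(2)] by simp
    have k: "int k = (int j + int b) mod int d" using True by (simp add: of_nat_mod)
    have "chi d (- (int a * int k)) = chi d (- (int a * int b)) * chi d (int ((d - a) mod d * j))"
      unfolding chi_add[symmetric]
    proof (rule chi_mod_eq[OF d0])
      have "(- int a * int b + int ((d - a) mod d * j)) mod int d
          = (- int a * int b + ((- int a) mod int d) * int j) mod int d"
        using ab by (simp add: int_neg_mod)
      also have "\<dots> = (- int a * int b + (((- int a) mod int d) * int j) mod int d) mod int d"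
        by (rule mod_add_right_eq[symmetric])
      also have "\<dots> = (- int a * int b + (- int a * int j) mod int d) mod int d"
        by (simp add: mod_mult_left_eq)
      also have "\<dots> = (- int a * (int j + int b)) mod int d"
        by (subst mod_add_right_eq) (simp add: algebra_simps)
      also have "\<dots> = (- int a * int k) mod int d" unfolding k by (rule mod_mult_right_eq[symmetric])
      finally show "(- (int a * int k)) mod int d = (- (int a * int b) + int ((d - a) mod d * j)) mod int d"
        by simp
    qed
    moreover have "cnj (weyl1 d a b k j) = cnj (wphase d a b) * chi d (- (int a * int k))"
      by (simp add: weyl1_def True[symmetric] cnj_chi)
    moreover have "weyl1 d ((d - a) mod d) ((d - b) mod d) j k
        = wphase d ((d - a) mod d) ((d - b) mod d) * chi d (int ((d - a) mod d * j))"
      by (simp add: weyl1_def j[symmetric])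
    ultimately show ?thesis using cnj_wphase[OF p ab] by (simp add: mult.assoc)
  next
    case False
    then have "j \<noteq> (k + (d - b) mod d) mod d"
      using mod_add_eq_iff_mod_add_neg[OF d0 jk(1) jk(2) ab(2)] by simp
    with False show ?thesis by (simp add: weyl1_def)
  qed
qed

lemma weyl1_zero: "k < d \<Longrightarrow> weyl1 d 0 0 j k = (if j = k then 1 else 0)"
  by (simp add: weyl1_def wphase_def)

lemma weyl1_unitary:
  assumes d: "0 < d" and b: "b < d" and jk: "j < d" "k < d"
  shows "(\<Sum>m<d. cnj (weyl1 d a b m j) * weyl1 d a b m k) = (if j = k then 1 else 0)"
proof -
  have unit: "cnj z * z = 1" if "cmod z = 1" for z :: complex
    using that complex_norm_square[of z] by (simp add: mult.commute)
  have "cnj (weyl1 d a b m j) * weyl1 d a b m k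
      = (if m = (j + b) mod d then (if j = k then 1 else 0) else 0)" for m
    using unit[OF cmod_wphase] unit[OF cmod_chi] mod_add_right_inj[OF d jk b]
    by (auto simp: weyl1_def mult_ac)
  then show ?thesis using d by (simp add: sum.delta)
qed

lemma weyl1_trace:
  assumes d: "0 < d" and ab: "a < d" "b < d" and nz: "a \<noteq> 0 \<or> b \<noteq> 0"
  shows "(\<Sum>j<d. weyl1 d a b j j) = 0"
proof (cases "b = 0")
  case True
  then have "\<not> int d dvd int a" using nz ab by (auto dest: zdvd_imp_le)
  then have "(\<Sum>j<d. chi d (int j * int a)) = 0" using sum_chi_multiples[OF d] by blast
  then have "(\<Sum>j<d. chi d (int (a * j))) = 0" by (simp add: mult.commute)
  then show ?thesis using True by (simp add: weyl1_def sum_distrib_left[symmetric])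
next
  case False
  have "j \<noteq> (j + b) mod d" if "j < d" for j
  proof
    assume "j = (j + b) mod d"
    then have "(b + j) mod d = (0 + j) mod d" using that by (simp add: add.commute)
    then show False using mod_add_right_inj[OF d ab(2) d that] False by simp
  qed
  then show ?thesis by (simp add: weyl1_def)
qed

section \<open>Operator algebra\<close>

definition op_id :: "nat \<Rightarrow> nat \<Rightarrow> qop" where
  "op_id d n = (\<lambda>x y. if x \<in> qbasis d n \<and> y \<in> qbasis d n \<and> x = y then 1 else 0)"

definition op_sum :: "'a set \<Rightarrow> ('a \<Rightarrow> qop) \<Rightarrow> qop" where
  "op_sum F h = (\<lambda>x y. \<Sum>v\<in>F. h v x y)"

lemma is_op_weyl: "is_op d n (weyl d n v)"
  by (auto simp: is_op_def weyl_def)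

lemma is_op_op_id: "is_op d n (op_id d n)"
  by (auto simp: is_op_def op_id_def)

lemma is_op_adj: "is_op d n A \<Longrightarrow> is_op d n (op_adj A)"
  by (simp add: is_op_def op_adj_def) blast

lemma is_op_smult: "is_op d n A \<Longrightarrow> is_op d n (op_smult c A)"
  by (simp add: is_op_def op_smult_def)

lemma is_op_op_sum: "(\<And>v. v \<in> F \<Longrightarrow> is_op d n (h v)) \<Longrightarrow> is_op d n (op_sum F h)"
  by (simp add: is_op_def op_sum_def)

lemma op_mult_assoc: "op_mult d n (op_mult d n A B) C = op_mult d n A (op_mult d n B C)"
  by (auto simp: op_mult_def sum_distrib_left sum_distrib_right mult.assoc intro!: ext sum.swap)

lemma op_mult_op_id_left: "is_op d n A \<Longrightarrow> op_mult d n (op_id d n) A = A"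
  by (intro ext) (auto simp: op_mult_def op_id_def is_op_def if_distrib[where f = "\<lambda>c. c * _"]
      cong: if_cong)

lemma op_mult_op_id_right: "is_op d n A \<Longrightarrow> op_mult d n A (op_id d n) = A"
  by (intro ext) (auto simp: op_mult_def op_id_def is_op_def if_distrib[where f = "\<lambda>c. _ * c"]
      cong: if_cong)

lemma op_mult_smult_left: "op_mult d n (op_smult c A) B = op_smult c (op_mult d n A B)"
  by (auto simp: op_mult_def op_smult_def sum_distrib_left mult.assoc intro!: ext)

lemma op_mult_smult_right: "op_mult d n A (op_smult c B) = op_smult c (op_mult d n A B)"
  by (auto simp: op_mult_def op_smult_def sum_distrib_left mult_ac intro!: ext)

lemma op_mult_add_left: "op_mult d n (op_add A B) C = op_add (op_mult d n A C) (op_mult d n B C)"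
  by (auto simp: op_mult_def op_add_def distrib_right sum.distrib intro!: ext)

lemma op_mult_add_right: "op_mult d n A (op_add B C) = op_add (op_mult d n A B) (op_mult d n A C)"
  by (auto simp: op_mult_def op_add_def distrib_left sum.distrib intro!: ext)

lemma op_mult_op_sum_left:
  "finite F \<Longrightarrow> op_mult d n (op_sum F h) B = op_sum F (\<lambda>v. op_mult d n (h v) B)"
  by (auto simp: op_mult_def op_sum_def sum_distrib_right intro!: ext sum.swap)

lemma op_mult_op_sum_right:
  "finite F \<Longrightarrow> op_mult d n A (op_sum F h) = op_sum F (\<lambda>v. op_mult d n A (h v))"
  by (auto simp: op_mult_def op_sum_def sum_distrib_left intro!: ext sum.swap)

lemma op_smult_one [simp]: "op_smult 1 A = A"
  by (simp add: op_smult_def)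

lemma op_smult_smult: "op_smult a (op_smult b A) = op_smult (a * b) A"
  by (simp add: op_smult_def mult.assoc)

lemma op_smult_op_sum: "op_smult c (op_sum F h) = op_sum F (\<lambda>v. op_smult c (h v))"
  by (simp add: op_smult_def op_sum_def sum_distrib_left)

lemma op_sum_cong: "(\<And>v. v \<in> F \<Longrightarrow> h v = h' v) \<Longrightarrow> op_sum F h = op_sum F h'"
  by (simp add: op_sum_def)

lemma op_sum_reindex: "bij_betw f F G \<Longrightarrow> op_sum F (\<lambda>v. h (f v)) = op_sum G h"
  unfolding op_sum_def by (intro ext) (rule sum.reindex_bij_betw)

lemma op_adj_adj [simp]: "op_adj (op_adj A) = A"
  by (simp add: op_adj_def)

lemma op_adj_mult: "op_adj (op_mult d n A B) = op_mult d n (op_adj B) (op_adj A)"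
  by (auto simp: op_adj_def op_mult_def mult.commute intro!: ext)

lemma op_adj_smult: "op_adj (op_smult c A) = op_smult (cnj c) (op_adj A)"
  by (simp add: op_adj_def op_smult_def)

lemma op_adj_add: "op_adj (op_add A B) = op_add (op_adj A) (op_adj B)"
  by (simp add: op_adj_def op_add_def)

lemma op_adj_op_sum: "op_adj (op_sum F h) = op_sum F (\<lambda>v. op_adj (h v))"
  by (simp add: op_adj_def op_sum_def)

lemma op_adj_op_id: "op_adj (op_id d n) = op_id d n"
  by (auto simp: op_adj_def op_id_def intro!: ext)

lemma op_trace_comm: "op_trace d n (op_mult d n A B) = op_trace d n (op_mult d n B A)"
  unfolding op_trace_def op_mult_def by (simp add: mult.commute) (rule sum.swap)

lemma op_trace_adj: "op_trace d n (op_adj A) = cnj (op_trace d n A)"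
  by (simp add: op_trace_def op_adj_def)

lemma op_trace_smult: "op_trace d n (op_smult c A) = c * op_trace d n A"
  by (simp add: op_trace_def op_smult_def sum_distrib_left)

lemma op_trace_add: "op_trace d n (op_add A B) = op_trace d n A + op_trace d n B"
  by (simp add: op_trace_def op_add_def sum.distrib)

lemma op_trace_op_sum: "op_trace d n (op_sum F h) = (\<Sum>v\<in>F. op_trace d n (h v))"
  by (simp add: op_trace_def op_sum_def sum.swap[of _ F])

lemma op_trace_op_id: "op_trace d n (op_id d n) = of_nat (d ^ n)"
  by (simp add: op_trace_def op_id_def card_qbasis)

section \<open>Weyl operators on \<open>n\<close> qudits\<close>

lemma weyl_apply:
  "x \<in> qbasis d n \<Longrightarrow> y \<in> qbasis d n \<Longrightarrow>
    weyl d n v x y = (\<Prod>k<n. weyl1 d (fst v ! k) (snd v ! k) (x ! k) (y ! k))"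
  by (simp add: weyl_def)

lemma weyl_vzero: "weyl d n (vzero n) = op_id d n"
proof (intro ext)
  fix x y
  show "weyl d n (vzero n) x y = op_id d n x y"
  proof (cases "x \<in> qbasis d n \<and> y \<in> qbasis d n")
    case True
    then have "weyl d n (vzero n) x y = (\<Prod>k<n. if x ! k = y ! k then 1 else 0)"
      by (simp add: weyl_apply nth_vzero weyl1_zero qbasis_iff)
    also have "\<dots> = (if x = y then 1 else 0)"
      using True by (intro prod_nth_indicator) (auto simp: qbasis_iff)
    finally show ?thesis using True by (simp add: op_id_def)
  qed (auto simp: weyl_def op_id_def)
qed

lemma op_adj_weyl:
  assumes p: "prime d" and v: "v \<in> Vn d n"
  shows "op_adj (weyl d n v) = weyl d n (vneg d v)"
proof (intro ext)
  fix x y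
  show "op_adj (weyl d n v) x y = weyl d n (vneg d v) x y"
  proof (cases "x \<in> qbasis d n \<and> y \<in> qbasis d n")
    case True
    then have "op_adj (weyl d n v) x y = (\<Prod>k<n. cnj (weyl1 d (fst v ! k) (snd v ! k) (y ! k) (x ! k)))"
      by (simp add: op_adj_def weyl_apply)
    also have "\<dots> = (\<Prod>k<n. weyl1 d (fst (vneg d v) ! k) (snd (vneg d v) ! k) (x ! k) (y ! k))"
      using True v by (intro prod.cong refl)
        (simp add: cnj_weyl1[OF p] nth_vneg Vn_nth_less qbasis_iff)
    finally show ?thesis using True by (simp add: weyl_apply)
  qed (auto simp: weyl_def op_adj_def)
qed

lemma weyl_unitary:
  assumes d: "0 < d" and v: "v \<in> Vn d n"
  shows "op_mult d n (op_adj (weyl d n v)) (weyl d n v) = op_id d n"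
proof (intro ext)
  fix x y
  show "op_mult d n (op_adj (weyl d n v)) (weyl d n v) x y = op_id d n x y"
  proof (cases "x \<in> qbasis d n \<and> y \<in> qbasis d n")
    case True
    let ?w = "\<lambda>k. weyl1 d (fst v ! k) (snd v ! k)"
    have "op_mult d n (op_adj (weyl d n v)) (weyl d n v) x y =
        (\<Sum>z\<in>qbasis d n. \<Prod>k<n. cnj (?w k (z ! k) (x ! k)) * ?w k (z ! k) (y ! k))"
      using True by (simp add: op_mult_def op_adj_def weyl_apply prod.distrib)
    also have "\<dots> = (\<Prod>k<n. \<Sum>m<d. cnj (?w k m (x ! k)) * ?w k m (y ! k))"
      by (rule sum_qbasis_prod)
    also have "\<dots> = (\<Prod>k<n. if x ! k = y ! k then 1 else 0)"
      using True v by (intro prod.cong refl) (simp add: weyl1_unitary[OF d] Vn_nth_less qbasis_iff)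
    also have "\<dots> = (if x = y then 1 else 0)"
      using True by (intro prod_nth_indicator) (auto simp: qbasis_iff)
    finally show ?thesis using True by (simp add: op_id_def)
  qed (auto simp: op_mult_def op_id_def)
qed

text \<open>\<open>w(v) = w(-v)\<^sup>*\<close>, so unitarity on the other side reduces to the one just proved.\<close>

lemma weyl_unitary':
  assumes p: "prime d" and v: "v \<in> Vn d n"
  shows "op_mult d n (weyl d n v) (op_adj (weyl d n v)) = op_id d n"
proof -
  have d: "0 < d" using p prime_gt_0_nat by blast
  have "weyl d n v = op_adj (weyl d n (vneg d v))"
    using op_adj_weyl[OF p vneg_Vn[OF d v]] by (simp add: vneg_vneg[OF v])
  then show ?thesis
    using weyl_unitary[OF d vneg_Vn[OF d v]] by simp
qed

definition weyl_cocycle :: "nat \<Rightarrow> nat \<Rightarrow> nat list \<times> nat list \<Rightarrow> nat list \<times> nat list \<Rightarrow> complex" where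
  "weyl_cocycle d n u v = (\<Prod>k<n. weyl1_cocycle d (fst u ! k) (snd u ! k) (fst v ! k) (snd v ! k))"

lemma cmod_weyl_cocycle: "cmod (weyl_cocycle d n u v) = 1"
  by (simp add: weyl_cocycle_def weyl1_cocycle_def prod_norm[symmetric] norm_mult norm_divide
      cmod_wphase)

lemma weyl_mult:
  assumes d: "0 < d" and u: "u \<in> Vn d n" and v: "v \<in> Vn d n"
  shows "op_mult d n (weyl d n u) (weyl d n v) = op_smult (weyl_cocycle d n u v) (weyl d n (vadd d u v))"
proof (intro ext)
  fix x y
  show "op_mult d n (weyl d n u) (weyl d n v) x y = op_smult (weyl_cocycle d n u v) (weyl d n (vadd d u v)) x y"
  proof (cases "x \<in> qbasis d n \<and> y \<in> qbasis d n")
    case True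
    let ?wu = "\<lambda>k. weyl1 d (fst u ! k) (snd u ! k)" and ?wv = "\<lambda>k. weyl1 d (fst v ! k) (snd v ! k)"
    have "op_mult d n (weyl d n u) (weyl d n v) x y =
        (\<Sum>z\<in>qbasis d n. \<Prod>k<n. ?wu k (x ! k) (z ! k) * ?wv k (z ! k) (y ! k))"
      using True by (simp add: op_mult_def weyl_apply prod.distrib)
    also have "\<dots> = (\<Prod>k<n. \<Sum>m<d. ?wu k (x ! k) m * ?wv k m (y ! k))"
      by (rule sum_qbasis_prod)
    also have "\<dots> = (\<Prod>k<n. weyl1_cocycle d (fst u ! k) (snd u ! k) (fst v ! k) (snd v ! k) *
        weyl1 d (fst (vadd d u v) ! k) (snd (vadd d u v) ! k) (x ! k) (y ! k))"
      using True u v by (intro prod.cong refl) (simp add: weyl1_mult[OF d] nth_vadd qbasis_iff)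
    also have "\<dots> = weyl_cocycle d n u v * weyl d n (vadd d u v) x y"
      using True by (simp add: weyl_cocycle_def weyl_apply prod.distrib)
    finally show ?thesis by (simp add: op_smult_def)
  qed (auto simp: op_mult_def weyl_def op_smult_def)
qed

lemma op_trace_weyl:
  assumes d: "0 < d" and v: "v \<in> Vn d n" and nz: "v \<noteq> vzero n"
  shows "op_trace d n (weyl d n v) = 0"
proof -
  obtain k where k: "k < n" "fst v ! k \<noteq> 0 \<or> snd v ! k \<noteq> 0"
    using nz vzero_eq_iff[OF v] by auto
  have "op_trace d n (weyl d n v)
      = (\<Sum>x\<in>qbasis d n. \<Prod>k<n. weyl1 d (fst v ! k) (snd v ! k) (x ! k) (x ! k))"
    by (simp add: op_trace_def weyl_apply)
  also have "\<dots> = (\<Prod>k<n. \<Sum>j<d. weyl1 d (fst v ! k) (snd v ! k) j j)"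
    by (rule sum_qbasis_prod)
  also have "\<dots> = 0"
    using k v by (intro prod_zero bexI[of _ k]) (auto simp: weyl1_trace[OF d] Vn_nth_less)
  finally show ?thesis .
qed

section \<open>States\<close>

definition op_form :: "nat \<Rightarrow> nat \<Rightarrow> qop \<Rightarrow> (nat list \<Rightarrow> complex) \<Rightarrow> (nat list \<Rightarrow> complex) \<Rightarrow> complex" where
  "op_form d n A a b = (\<Sum>x\<in>qbasis d n. \<Sum>y\<in>qbasis d n. cnj (a x) * A x y * b y)"

lemma is_state_iff_op_form:
  "is_state d n \<rho> \<longleftrightarrow> is_op d n \<rho> \<and> op_adj \<rho> = \<rho> \<and> (\<forall>v. 0 \<le> Re (op_form d n \<rho> v v)) \<and>
    op_trace d n \<rho> = 1"
  by (simp add: is_state_def op_form_def)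

lemma op_form_add_left: "op_form d n A (\<lambda>x. a x + b x) c = op_form d n A a c + op_form d n A b c"
  by (simp add: op_form_def ring_distribs sum.distrib)

lemma op_form_add_right: "op_form d n A a (\<lambda>x. b x + c x) = op_form d n A a b + op_form d n A a c"
  by (simp add: op_form_def ring_distribs sum.distrib)

lemma op_form_smult_left: "op_form d n A (\<lambda>x. s * a x) b = cnj s * op_form d n A a b"
  by (simp add: op_form_def sum_distrib_left mult_ac)

lemma op_form_smult_right: "op_form d n A a (\<lambda>x. s * b x) = s * op_form d n A a b"
  by (simp add: op_form_def sum_distrib_left mult_ac)

lemma op_form_swap: "op_adj A = A \<Longrightarrow> op_form d n A b a = cnj (op_form d n A a b)"
proof -
  assume "op_adj A = A"
  then have A: "cnj (A x y) = A y x" for x y by (metis op_adj_def)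
  have "cnj (op_form d n A a b) = (\<Sum>x\<in>qbasis d n. \<Sum>y\<in>qbasis d n. cnj (b y) * A y x * a x)"
    unfolding op_form_def by (simp add: A mult_ac)
  also have "\<dots> = op_form d n A b a" unfolding op_form_def by (rule sum.swap)
  finally show ?thesis by simp
qed

lemma op_form_basis_left:
  "x0 \<in> qbasis d n \<Longrightarrow>
    op_form d n A (\<lambda>x. if x = x0 then c else 0) v = cnj c * (\<Sum>y\<in>qbasis d n. A x0 y * v y)"
proof -
  assume x0: "x0 \<in> qbasis d n"
  have "(\<Sum>y\<in>qbasis d n. cnj (if x = x0 then c else 0) * A x y * v y)
      = (if x = x0 then cnj c * (\<Sum>y\<in>qbasis d n. A x0 y * v y) else 0)" for x
    by (auto simp: sum_distrib_left mult_ac)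
  then show ?thesis using x0 unfolding op_form_def by (simp add: sum.delta)
qed

lemma real_quadratic_nonneg_imp_linear_zero:
  fixes a b :: real
  assumes h: "\<And>s. 0 \<le> 2 * s * a + s\<^sup>2 * b" and b: "0 \<le> b"
  shows "a = 0"
proof -
  define s where "s = - a / (b + 1)"
  have bs: "(b + 1) * s = - a" using b by (simp add: s_def)
  have "0 \<le> (b + 1)\<^sup>2 * (2 * s * a + s\<^sup>2 * b)" using h[of s] by simp
  also have "(b + 1)\<^sup>2 * (2 * s * a + s\<^sup>2 * b) = 2 * (b + 1) * a * ((b + 1) * s) + ((b + 1) * s)\<^sup>2 * b"
    by (simp add: algebra_simps power2_eq_square)
  also have "\<dots> = - a\<^sup>2 * (b + 2)" unfolding bs by (simp add: algebra_simps power2_eq_square)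
  finally have "a\<^sup>2 * (b + 2) \<le> 0" by simp
  then show ?thesis using b by (simp add: mult_le_0_iff)
qed

text \<open>For a positive semidefinite \<open>\<rho>\<close>, \<open>\<langle>v, \<rho> v\<rangle> = 0\<close> forces \<open>\<rho> v = 0\<close>: otherwise perturbing \<open>v\<close>
  by a small multiple of a basis vector makes the form negative.\<close>

lemma state_form_zero_imp_apply_zero:
  assumes st: "is_state d n \<rho>" and z: "Re (op_form d n \<rho> v v) = 0" and x0: "x0 \<in> qbasis d n"
  shows "(\<Sum>y\<in>qbasis d n. \<rho> x0 y * v y) = 0"
proof -
  have herm: "op_adj \<rho> = \<rho>" and psd: "\<And>w. 0 \<le> Re (op_form d n \<rho> w w)"
    using st by (auto simp: is_state_iff_op_form)
  let ?r = "\<Sum>y\<in>qbasis d n. \<rho> x0 y * v y"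
  have "Re (cnj c * ?r) = 0" for c
  proof (rule real_quadratic_nonneg_imp_linear_zero)
    define e where "e = (\<lambda>x. if x = x0 then c else 0)"
    have "op_form d n \<rho> (\<lambda>x. v x + of_real s * e x) (\<lambda>x. v x + of_real s * e x)
        = op_form d n \<rho> v v + of_real s * op_form d n \<rho> v e + of_real s * op_form d n \<rho> e v
          + of_real s * of_real s * op_form d n \<rho> e e" for s
      by (simp add: op_form_add_left op_form_add_right op_form_smult_left op_form_smult_right
          algebra_simps)
    moreover have "Re (op_form d n \<rho> v e) = Re (op_form d n \<rho> e v)"
      using op_form_swap[OF herm, where a = e and b = v] by simp
    moreover have "op_form d n \<rho> e v = cnj c * ?r"
      unfolding e_def by (rule op_form_basis_left[OF x0])
    ultimately have "Re (op_form d n \<rho> (\<lambda>x. v x + of_real s * e x) (\<lambda>x. v x + of_real s * e x))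
        = 2 * s * Re (cnj c * ?r) + s\<^sup>2 * Re (op_form d n \<rho> e e)" for s
      using z by (simp add: power2_eq_square)
    then show "0 \<le> 2 * s * Re (cnj c * ?r) + s\<^sup>2 * Re (op_form d n \<rho> e e)" for s
      using psd by metis
    show "0 \<le> Re (op_form d n \<rho> e e)" by (rule psd)
  qed
  from this[of 1] this[of \<i>] show ?thesis by (simp add: complex_eq_iff)
qed

lemma state_annihilator:
  assumes st: "is_state d n \<rho>" and tr: "op_trace d n (op_mult d n (op_adj A) (op_mult d n \<rho> A)) = 0"
  shows "op_mult d n \<rho> A = (\<lambda>x y. 0)"
proof -
  have psd: "0 \<le> Re (op_form d n \<rho> w w)" for w
    using st by (simp add: is_state_iff_op_form)
  have "op_trace d n (op_mult d n (op_adj A) (op_mult d n \<rho> A))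
      = (\<Sum>j\<in>qbasis d n. op_form d n \<rho> (\<lambda>x. A x j) (\<lambda>x. A x j))"
    unfolding op_trace_def op_form_def op_mult_def op_adj_def
    by (intro sum.cong refl) (simp add: sum_distrib_left mult.assoc)
  then have "(\<Sum>j\<in>qbasis d n. Re (op_form d n \<rho> (\<lambda>x. A x j) (\<lambda>x. A x j))) = 0"
    using tr by (metis Re_sum zero_complex.sel(1))
  then have "Re (op_form d n \<rho> (\<lambda>x. A x j) (\<lambda>x. A x j)) = 0" if "j \<in> qbasis d n" for j
    using that psd by (simp add: sum_nonneg_eq_0_iff)
  then show ?thesis
    by (intro ext) (simp add: op_mult_def state_form_zero_imp_apply_zero[OF st])
qed

lemma op_trace_mult_adj:
  "op_adj \<rho> = \<rho> \<Longrightarrow> op_trace d n (op_mult d n \<rho> (op_adj U)) = cnj (op_trace d n (op_mult d n \<rho> U))"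
  by (metis op_adj_mult op_trace_adj op_trace_comm)

text \<open>Equality case of the Cauchy--Schwarz inequality \<open>|Tr(\<rho> U)| \<le> 1\<close>: the operator
  \<open>A = U - \<mu> I\<close> with \<open>\<mu> = Tr(\<rho> U)\<close> satisfies \<open>Tr(A\<^sup>* \<rho> A) = Tr(\<rho> A A\<^sup>*) = 1 - |\<mu>|\<^sup>2 = 0\<close>.\<close>

lemma state_mult_unitary_eigen:
  assumes st: "is_state d n \<rho>" and U: "is_op d n U" and unitary: "op_mult d n U (op_adj U) = op_id d n"
    and m: "cmod (op_trace d n (op_mult d n \<rho> U)) = 1"
  shows "op_mult d n \<rho> U = op_smult (op_trace d n (op_mult d n \<rho> U)) \<rho>"
proof -
  have \<rho>_basic: "is_op d n \<rho>" "op_adj \<rho> = \<rho>" "op_trace d n \<rho> = 1"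
    using st by (auto simp: is_state_def)
  define \<mu> where "\<mu> = op_trace d n (op_mult d n \<rho> U)"
  have \<mu>: "\<mu> * cnj \<mu> = 1" using m complex_norm_square[of \<mu>] by (simp add: \<mu>_def)
  define A where "A = op_add U (op_smult (- \<mu>) (op_id d n))"
  have "op_mult d n A (op_adj A) = op_add (op_add (op_id d n) (op_smult (- cnj \<mu>) U))
      (op_add (op_smult (- \<mu>) (op_adj U)) (op_smult (\<mu> * cnj \<mu>) (op_id d n)))"
    unfolding A_def op_adj_add op_adj_smult op_adj_op_id
    by (simp add: op_mult_add_left op_mult_add_right op_mult_smult_left op_mult_smult_right unitary
        op_mult_op_id_left op_mult_op_id_right U is_op_adj is_op_op_id op_smult_smult mult.commute)
      (simp add: op_add_def op_smult_def fun_eq_iff algebra_simps)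
  then have "op_trace d n (op_mult d n \<rho> (op_mult d n A (op_adj A))) =
      op_trace d n \<rho> + (- cnj \<mu>) * \<mu> + (- \<mu>) * cnj \<mu> + \<mu> * cnj \<mu> * op_trace d n \<rho>"
    by (simp add: op_mult_add_right op_mult_smult_right op_trace_add op_trace_smult
        op_mult_op_id_right \<rho>_basic op_trace_mult_adj \<mu>_def)
  also have "\<dots> = 0" using \<mu> \<rho>_basic(3) by (simp add: mult.commute)
  finally have "op_trace d n (op_mult d n (op_adj A) (op_mult d n \<rho> A)) = 0"
    by (simp add: op_trace_comm[of d n "op_adj A"] op_mult_assoc)
  then have "op_mult d n \<rho> A = (\<lambda>x y. 0)" by (rule state_annihilator[OF st])
  moreover have "op_mult d n \<rho> A = op_add (op_mult d n \<rho> U) (op_smult (- \<mu>) \<rho>)"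
    by (simp add: A_def op_mult_add_right op_mult_smult_right op_mult_op_id_right \<rho>_basic)
  ultimately show ?thesis
    unfolding \<mu>_def[symmetric] by (intro ext) (simp add: op_add_def op_smult_def fun_eq_iff)
qed

section \<open>Projections\<close>

lemma projection_diag:
  assumes P: "is_projection d n P" and x: "x \<in> qbasis d n"
  shows "P x x = of_real (\<Sum>z\<in>qbasis d n. (cmod (P x z))\<^sup>2)"
proof -
  have adj: "P z x = cnj (P x z)" for z
    using P unfolding is_projection_def by (metis op_adj_def)
  have "P x x = op_mult d n P P x x" using P by (simp add: is_projection_def)
  also have "\<dots> = (\<Sum>z\<in>qbasis d n. of_real ((cmod (P x z))\<^sup>2))"
    using x by (simp add: op_mult_def adj complex_norm_square del: of_real_power)
  finally show ?thesis by simp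
qed

text \<open>A nonzero column \<open>u\<close> of \<open>P\<close> satisfies \<open>P u = u\<close>, so Cauchy--Schwarz gives
  \<open>\<parallel>u\<parallel>\<^sup>2 \<le> \<parallel>P\<parallel>\<^sub>F\<^sup>2 \<parallel>u\<parallel>\<^sup>2\<close>, and \<open>\<parallel>P\<parallel>\<^sub>F\<^sup>2 = Tr P\<close> for a projection.\<close>

lemma projection_trace_ge_1:
  assumes P: "is_projection d n P" and nz: "P \<noteq> (\<lambda>x y. 0)"
  shows "1 \<le> Re (op_trace d n P)"
proof -
  let ?B = "qbasis d n"
  have adj: "P z y = cnj (P y z)" for z y
    using P unfolding is_projection_def by (metis op_adj_def)
  obtain x0 y0 where "P y0 x0 \<noteq> 0" using nz by (meson ext)
  moreover have "is_op d n P" using P by (simp add: is_projection_def)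
  ultimately have x0: "x0 \<in> ?B" and y0: "y0 \<in> ?B" by (auto simp: is_op_def)
  define u where "u y = cmod (P y x0)" for y
  define s where "s = (\<Sum>z\<in>?B. (u z)\<^sup>2)"
  have "0 < (u y0)\<^sup>2" using \<open>P y0 x0 \<noteq> 0\<close> by (simp add: u_def)
  also have "(u y0)\<^sup>2 \<le> s" unfolding s_def by (rule member_le_sum) (use y0 in auto)
  finally have s0: "0 < s" .
  have row: "(u y)\<^sup>2 \<le> (\<Sum>z\<in>?B. (cmod (P y z))\<^sup>2) * s" if y: "y \<in> ?B" for y
  proof -
    have "P y x0 = op_mult d n P P y x0" using P by (simp add: is_projection_def)
    then have "u y = cmod (\<Sum>z\<in>?B. P y z * P z x0)" using x0 y by (simp add: u_def op_mult_def)
    also have "\<dots> \<le> (\<Sum>z\<in>?B. cmod (P y z) * u z)"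
      unfolding u_def by (rule order_trans[OF norm_sum]) (simp add: norm_mult)
    finally have "(u y)\<^sup>2 \<le> (\<Sum>z\<in>?B. cmod (P y z) * u z)\<^sup>2"
      by (simp add: power_mono u_def)
    also have "\<dots> \<le> (\<Sum>z\<in>?B. (cmod (P y z))\<^sup>2) * s"
      unfolding s_def by (rule Cauchy_Schwarz_ineq_sum)
    finally show ?thesis .
  qed
  have "s = (\<Sum>y\<in>?B. (u y)\<^sup>2)" by (simp add: s_def)
  also have "\<dots> \<le> (\<Sum>y\<in>?B. (\<Sum>z\<in>?B. (cmod (P y z))\<^sup>2) * s)" by (intro sum_mono row)
  also have "\<dots> = (\<Sum>y\<in>?B. \<Sum>z\<in>?B. (cmod (P y z))\<^sup>2) * s" by (simp add: sum_distrib_right)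
  also have "(\<Sum>y\<in>?B. \<Sum>z\<in>?B. (cmod (P y z))\<^sup>2) = Re (op_trace d n P)"
    by (simp add: op_trace_def Re_sum projection_diag[OF P])
  finally show ?thesis using s0 by simp
qed

section \<open>The stabilizer group of a state\<close>

lemma op_sum_in_cstar_gen:
  assumes "finite F" "F \<noteq> {}" "\<And>v. v \<in> F \<Longrightarrow> h v \<in> cstar_gen d n G"
  shows "op_sum F h \<in> cstar_gen d n G"
  using assms
proof (induction F rule: finite_ne_induct)
  case (singleton x)
  then show ?case by (simp add: op_sum_def)
next
  case (insert x F)
  then have "op_sum (insert x F) h = op_add (h x) (op_sum F h)"
    by (simp add: op_sum_def op_add_def)
  then show ?case using insert by (auto intro: cstar_gen.add)
qed

locale stabilized_state =
  fixes d n :: nat and \<rho> :: qop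
  assumes prime: "prime d" and state: "is_state d n \<rho>"
begin

lemma d_pos: "0 < d"
  using prime prime_gt_0_nat by blast

lemma \<rho>_basic: "is_op d n \<rho>" "op_adj \<rho> = \<rho>" "op_trace d n \<rho> = 1"
  using state by (auto simp: is_state_def)

definition expect :: "nat list \<times> nat list \<Rightarrow> complex" where
  "expect v = op_trace d n (op_mult d n \<rho> (weyl d n v))"

definition stab :: "(nat list \<times> nat list) set" where
  "stab = {v \<in> Vn d n. cmod (expect v) = 1}"

text \<open>\<open>stab_weyl v\<close> is \<open>w(v)\<close> rephased so that \<open>\<rho> \<cdot> stab_weyl v = \<rho>\<close>; these operators form a
  representation of \<open>stab\<close>.\<close>

definition stab_weyl :: "nat list \<times> nat list \<Rightarrow> qop" where
  "stab_weyl v = op_smult (cnj (expect v)) (weyl d n v)"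

definition stab_proj :: qop where
  "stab_proj = op_smult (1 / of_nat (card stab)) (op_sum stab stab_weyl)"

definition stab_comb :: "(nat list \<times> nat list \<Rightarrow> complex) \<Rightarrow> qop" where
  "stab_comb f = op_sum stab (\<lambda>v. op_smult (f v) (stab_weyl v))"

lemma stab_Vn: "v \<in> stab \<Longrightarrow> v \<in> Vn d n"
  by (simp add: stab_def)

lemma cmod_expect: "v \<in> stab \<Longrightarrow> cmod (expect v) = 1"
  by (simp add: stab_def)

lemma cnj_expect_mult: "v \<in> stab \<Longrightarrow> cnj (expect v) * expect v = 1"
  using cmod_expect complex_norm_square[of "expect v"] by (simp add: mult.commute)

lemma finite_stab: "finite stab"
  by (rule finite_subset[of _ "Vn d n"]) (auto simp: stab_Vn finite_Vn)

lemma expect_vneg: "v \<in> Vn d n \<Longrightarrow> expect (vneg d v) = cnj (expect v)"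
  unfolding expect_def op_adj_weyl[OF prime, symmetric] by (rule op_trace_mult_adj[OF \<rho>_basic(2)])

lemma charfun_eq_cnj_expect: "v \<in> Vn d n \<Longrightarrow> charfun d n \<rho> v = cnj (expect v)"
  unfolding expect_vneg[symmetric] by (simp add: charfun_def expect_def)

lemma charfun_unimodular_eq_stab: "{v \<in> Vn d n. cmod (charfun d n \<rho> v) = 1} = stab"
  by (auto simp: stab_def charfun_eq_cnj_expect)

lemma expect_vzero: "expect (vzero n) = 1"
  by (simp add: expect_def weyl_vzero op_mult_op_id_right \<rho>_basic)

lemma vzero_stab: "vzero n \<in> stab"
  using d_pos by (simp add: stab_def expect_vzero vzero_Vn)

lemma card_stab_pos: "0 < card stab"
  using finite_stab vzero_stab by (auto simp: card_gt_0_iff)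

lemma vneg_stab: "v \<in> stab \<Longrightarrow> vneg d v \<in> stab"
  by (simp add: stab_def expect_vneg vneg_Vn[OF d_pos])

lemma state_mult_weyl:
  assumes v: "v \<in> stab"
  shows "op_mult d n \<rho> (weyl d n v) = op_smult (expect v) \<rho>"
  using state_mult_unitary_eigen[OF state is_op_weyl weyl_unitary'[OF prime stab_Vn[OF v]]]
    cmod_expect[OF v] by (simp add: expect_def)

lemma expect_vadd:
  assumes u: "u \<in> stab" and v: "v \<in> stab"
  shows "weyl_cocycle d n u v * expect (vadd d u v) = expect u * expect v"
proof -
  have "op_trace d n (op_mult d n \<rho> (op_mult d n (weyl d n u) (weyl d n v))) = expect u * expect v"
    unfolding op_mult_assoc[symmetric] state_mult_weyl[OF u]
    by (simp add: op_mult_smult_left op_trace_smult expect_def)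
  then show ?thesis
    by (simp add: weyl_mult[OF d_pos stab_Vn[OF u] stab_Vn[OF v]] op_mult_smult_right op_trace_smult
        expect_def)
qed

lemma vadd_stab: "u \<in> stab \<Longrightarrow> v \<in> stab \<Longrightarrow> vadd d u v \<in> stab"
proof -
  assume u: "u \<in> stab" and v: "v \<in> stab"
  have "cmod (weyl_cocycle d n u v * expect (vadd d u v)) = 1"
    using expect_vadd[OF u v] cmod_expect[OF u] cmod_expect[OF v] by (simp add: norm_mult)
  then have "cmod (expect (vadd d u v)) = 1" by (simp add: norm_mult cmod_weyl_cocycle)
  moreover have "vadd d u v \<in> Vn d n" by (rule vadd_Vn[OF d_pos stab_Vn[OF u] stab_Vn[OF v]])
  ultimately show ?thesis by (simp add: stab_def)
qed

text \<open>Both products \<open>w(u) w(v)\<close> and \<open>w(v) w(u)\<close> are multiples of \<open>w(u + v)\<close>, and the cocycles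
  are pinned down by \<open>\<lambda>(u) \<lambda>(v) / \<lambda>(u + v)\<close>.\<close>

lemma weyl_commute:
  assumes u: "u \<in> stab" and v: "v \<in> stab"
  shows "op_mult d n (weyl d n u) (weyl d n v) = op_mult d n (weyl d n v) (weyl d n u)"
proof -
  have "vadd d v u = vadd d u v" by (rule vadd_comm[OF stab_Vn[OF v] stab_Vn[OF u]])
  then have "weyl_cocycle d n u v * expect (vadd d u v) = weyl_cocycle d n v u * expect (vadd d u v)"
    using expect_vadd[OF u v] expect_vadd[OF v u] by (simp add: mult.commute)
  moreover have "expect (vadd d u v) \<noteq> 0" using cmod_expect[OF vadd_stab[OF u v]] by auto
  ultimately have "weyl_cocycle d n u v = weyl_cocycle d n v u" by simp
  then show ?thesis
    using \<open>vadd d v u = vadd d u v\<close>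
    by (simp add: weyl_mult[OF d_pos stab_Vn[OF u] stab_Vn[OF v]] weyl_mult[OF d_pos stab_Vn[OF v] stab_Vn[OF u]])
qed

lemma stab_weyl_mult:
  assumes u: "u \<in> stab" and v: "v \<in> stab"
  shows "op_mult d n (stab_weyl u) (stab_weyl v) = stab_weyl (vadd d u v)"
proof -
  let ?w = "vadd d u v"
  have "cnj (expect u) * cnj (expect v) * weyl_cocycle d n u v * expect ?w
      = (cnj (expect u) * expect u) * (cnj (expect v) * expect v)"
    using expect_vadd[OF u v] by (simp add: mult_ac)
  also have "\<dots> = cnj (expect ?w) * expect ?w"
    using cnj_expect_mult u v vadd_stab by simp
  finally have "cnj (expect u) * cnj (expect v) * weyl_cocycle d n u v = cnj (expect ?w)"
    using cmod_expect[OF vadd_stab[OF u v]] by (metis mult_cancel_right norm_zero zero_neq_one)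
  then show ?thesis
    unfolding stab_weyl_def op_mult_smult_left op_mult_smult_right op_smult_smult
      weyl_mult[OF d_pos stab_Vn[OF u] stab_Vn[OF v]]
    by (simp add: mult_ac)
qed

lemma op_adj_stab_weyl: "v \<in> stab \<Longrightarrow> op_adj (stab_weyl v) = stab_weyl (vneg d v)"
  by (simp add: stab_weyl_def op_adj_smult op_adj_weyl[OF prime] expect_vneg stab_Vn)

lemma weyl_eq_stab_weyl: "v \<in> stab \<Longrightarrow> weyl d n v = op_smult (expect v) (stab_weyl v)"
  using cnj_expect_mult[of v] by (simp add: stab_weyl_def op_smult_smult mult.commute)

lemma bij_betw_vadd:
  assumes u: "u \<in> stab"
  shows "bij_betw (vadd d u) stab stab"
proof (rule bij_betw_byWitness[where f' = "vadd d (vneg d u)"])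
  have uV: "u \<in> Vn d n" by (rule stab_Vn[OF u])
  show "\<forall>a\<in>stab. vadd d (vneg d u) (vadd d u a) = a"
    using vadd_vneg_cancel[OF d_pos uV] stab_Vn by blast
  show "\<forall>a\<in>stab. vadd d u (vadd d (vneg d u) a) = a"
    using vadd_vneg_cancel[OF d_pos vneg_Vn[OF d_pos uV]] stab_Vn by (simp add: vneg_vneg[OF uV])
  show "vadd d u ` stab \<subseteq> stab" using vadd_stab[OF u] by blast
  show "vadd d (vneg d u) ` stab \<subseteq> stab" using vadd_stab[OF vneg_stab[OF u]] by blast
qed

lemma bij_betw_vadd_right:
  assumes v: "v \<in> stab"
  shows "bij_betw (\<lambda>u. vadd d u v) stab stab"
proof -
  have "vadd d u v = vadd d v u" if "u \<in> stab" for u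
    by (rule vadd_comm[OF stab_Vn[OF that] stab_Vn[OF v]])
  then show ?thesis using bij_betw_vadd[OF v] by (simp cong: bij_betw_cong)
qed

lemma bij_betw_vneg: "bij_betw (vneg d) stab stab"
proof -
  have "vneg d (vneg d a) = a" if "a \<in> stab" for a by (rule vneg_vneg[OF stab_Vn[OF that]])
  then show ?thesis by (intro bij_betw_byWitness[where f' = "vneg d"]) (auto intro: vneg_stab)
qed

section \<open>The minimal projection\<close>

lemma stab_proj_mult_stab_weyl: "v \<in> stab \<Longrightarrow> op_mult d n stab_proj (stab_weyl v) = stab_proj"
proof -
  assume v: "v \<in> stab"
  have "op_mult d n (op_sum stab stab_weyl) (stab_weyl v) = op_sum stab (\<lambda>u. stab_weyl (vadd d u v))"
    by (simp add: op_mult_op_sum_left finite_stab stab_weyl_mult v cong: op_sum_cong)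
  also have "\<dots> = op_sum stab stab_weyl" by (rule op_sum_reindex[OF bij_betw_vadd_right[OF v]])
  finally show ?thesis unfolding stab_proj_def by (simp add: op_mult_smult_left)
qed

lemma stab_comb_mult_left: "op_mult d n stab_proj (stab_comb f) = op_smult (\<Sum>v\<in>stab. f v) stab_proj"
proof -
  have "op_mult d n stab_proj (stab_comb f) = op_sum stab (\<lambda>v. op_smult (f v) stab_proj)"
    unfolding stab_comb_def op_mult_op_sum_right[OF finite_stab] op_mult_smult_right
    by (rule op_sum_cong) (simp add: stab_proj_mult_stab_weyl)
  then show ?thesis by (simp add: op_sum_def op_smult_def sum_distrib_right)
qed

lemma stab_proj_idem: "op_mult d n stab_proj stab_proj = stab_proj"
proof -
  have "stab_proj = stab_comb (\<lambda>v. 1 / of_nat (card stab))"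
    by (simp add: stab_proj_def stab_comb_def op_smult_op_sum)
  then have "op_mult d n stab_proj stab_proj = op_smult (of_nat (card stab) / of_nat (card stab)) stab_proj"
    by (metis stab_comb_mult_left sum_constant times_divide_eq_right mult_1_right)
  then show ?thesis using card_stab_pos by simp
qed

lemma op_adj_stab_proj: "op_adj stab_proj = stab_proj"
proof -
  have "op_adj (op_sum stab stab_weyl) = op_sum stab (\<lambda>v. stab_weyl (vneg d v))"
    unfolding op_adj_op_sum by (rule op_sum_cong) (simp add: op_adj_stab_weyl)
  also have "\<dots> = op_sum stab stab_weyl" by (rule op_sum_reindex[OF bij_betw_vneg])
  finally show ?thesis by (simp add: stab_proj_def op_adj_smult)
qed

lemma is_projection_stab_proj: "is_projection d n stab_proj"
  unfolding is_projection_def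
  by (simp add: stab_proj_def is_op_smult is_op_op_sum stab_weyl_def is_op_weyl
      op_adj_stab_proj[unfolded stab_proj_def] stab_proj_idem[unfolded stab_proj_def])

text \<open>Only the identity term survives in the trace, since \<open>Tr w(v) = 0\<close> for \<open>v \<noteq> 0\<close>.\<close>

lemma op_trace_stab_proj: "op_trace d n stab_proj = of_nat (d ^ n) / of_nat (card stab)"
proof -
  have "op_trace d n (stab_weyl v) = (if v = vzero n then of_nat (d ^ n) else 0)" if "v \<in> stab" for v
    using that by (auto simp: stab_weyl_def expect_vzero weyl_vzero op_trace_op_id op_trace_smult
        op_trace_weyl[OF d_pos stab_Vn])
  then have "op_trace d n (op_sum stab stab_weyl) = of_nat (d ^ n)"
    by (simp add: op_trace_op_sum finite_stab vzero_stab cong: sum.cong)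
  then show ?thesis by (simp add: stab_proj_def op_trace_smult)
qed

lemma stab_proj_nonzero: "stab_proj \<noteq> (\<lambda>x y. 0)"
proof
  assume "stab_proj = (\<lambda>x y. 0)"
  then have "op_trace d n stab_proj = 0" by (simp add: op_trace_def)
  then show False using op_trace_stab_proj d_pos card_stab_pos by simp
qed

lemma stab_proj_in_cstar_gen: "stab_proj \<in> cstar_gen d n (weyl d n ` stab)"
  unfolding stab_proj_def stab_weyl_def
  using finite_stab vzero_stab by (intro cstar_gen.smult op_sum_in_cstar_gen cstar_gen.gen) auto

lemma stab_comb_weyl: "v \<in> stab \<Longrightarrow> weyl d n v = stab_comb (\<lambda>u. if u = v then expect v else 0)"
proof -
  assume v: "v \<in> stab"
  have "(if u = v then expect v else 0) * stab_weyl u x y = (if u = v then expect v * stab_weyl v x y else 0)"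
    for u x y by simp
  then show ?thesis
    unfolding stab_comb_def weyl_eq_stab_weyl[OF v] using v
    by (intro ext) (simp add: op_sum_def op_smult_def finite_stab)
qed

lemma stab_comb_mult:
  "op_mult d n (stab_comb f) (stab_comb f') = stab_comb (\<lambda>w. \<Sum>u\<in>stab. f u * f' (vadd d (vneg d u) w))"
proof -
  have inner: "op_sum stab (\<lambda>v. op_smult (f' v) (op_mult d n (stab_weyl u) (stab_weyl v)))
      = op_sum stab (\<lambda>w. op_smult (f' (vadd d (vneg d u) w)) (stab_weyl w))" if u: "u \<in> stab" for u
  proof -
    have "op_sum stab (\<lambda>v. op_smult (f' v) (op_mult d n (stab_weyl u) (stab_weyl v)))
        = op_sum stab (\<lambda>v. (\<lambda>w. op_smult (f' (vadd d (vneg d u) w)) (stab_weyl w)) (vadd d u v))"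
      by (rule op_sum_cong) (simp add: stab_weyl_mult u vadd_vneg_cancel[OF d_pos stab_Vn stab_Vn])
    also have "\<dots> = op_sum stab (\<lambda>w. op_smult (f' (vadd d (vneg d u) w)) (stab_weyl w))"
      by (rule op_sum_reindex[OF bij_betw_vadd[OF u]])
    finally show ?thesis .
  qed
  have "op_mult d n (stab_comb f) (stab_comb f') = op_sum stab (\<lambda>u. op_smult (f u)
      (op_sum stab (\<lambda>v. op_smult (f' v) (op_mult d n (stab_weyl u) (stab_weyl v)))))"
    unfolding stab_comb_def op_mult_op_sum_left[OF finite_stab]
    by (rule op_sum_cong) (simp add: op_mult_smult_left op_mult_op_sum_right[OF finite_stab]
        op_mult_smult_right op_smult_op_sum op_smult_smult mult.commute)
  also have "\<dots> = op_sum stab (\<lambda>u. op_smult (f u)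
      (op_sum stab (\<lambda>w. op_smult (f' (vadd d (vneg d u) w)) (stab_weyl w))))"
    by (rule op_sum_cong) (simp add: inner)
  also have "\<dots> = stab_comb (\<lambda>w. \<Sum>u\<in>stab. f u * f' (vadd d (vneg d u) w))"
    unfolding stab_comb_def
    by (intro ext) (simp add: op_sum_def op_smult_def sum_distrib_left sum_distrib_right mult.assoc,
        rule sum.swap)
  finally show ?thesis .
qed

lemma cstar_gen_stab_imp_stab_comb: "Q \<in> cstar_gen d n (weyl d n ` stab) \<Longrightarrow> \<exists>f. Q = stab_comb f"
proof (induction rule: cstar_gen.induct)
  case (gen A)
  then show ?case using stab_comb_weyl by blast
next
  case (add A B)
  then obtain f f' where "A = stab_comb f" "B = stab_comb f'" by blast
  then have "op_add A B = stab_comb (\<lambda>v. f v + f' v)"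
    by (simp add: stab_comb_def op_sum_def op_add_def op_smult_def sum.distrib ring_distribs)
  then show ?case by blast
next
  case (smult A c)
  then obtain f where "A = stab_comb f" by blast
  then have "op_smult c A = stab_comb (\<lambda>v. c * f v)"
    by (simp add: stab_comb_def op_smult_op_sum op_smult_smult)
  then show ?case by blast
next
  case (mult A B)
  then show ?case using stab_comb_mult by blast
next
  case (adj A)
  then obtain f where f: "A = stab_comb f" by blast
  have "op_adj A = op_sum stab (\<lambda>v. (\<lambda>w. op_smult (cnj (f (vneg d w))) (stab_weyl w)) (vneg d v))"
    unfolding f stab_comb_def op_adj_op_sum
    by (rule op_sum_cong) (simp add: op_adj_smult op_adj_stab_weyl vneg_vneg[OF stab_Vn])
  also have "\<dots> = stab_comb (\<lambda>w. cnj (f (vneg d w)))"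
    unfolding stab_comb_def by (rule op_sum_reindex[OF bij_betw_vneg])
  finally show ?case by blast
qed

text \<open>A subprojection \<open>Q = P Q\<close> in the algebra is a combination on which \<open>P\<close> acts by a scalar,
  so \<open>Q = c P\<close> with \<open>c\<^sup>2 = c\<close>.\<close>

lemma minimal_projection_stab_proj:
  "minimal_projection d n (cstar_gen d n (weyl d n ` stab)) stab_proj"
  unfolding minimal_projection_def
proof (intro conjI ballI impI stab_proj_in_cstar_gen is_projection_stab_proj stab_proj_nonzero)
  fix Q
  assume Q: "Q \<in> cstar_gen d n (weyl d n ` stab)"
    and sub: "is_projection d n Q \<and> op_mult d n stab_proj Q = Q"
  obtain f where f: "Q = stab_comb f" using cstar_gen_stab_imp_stab_comb[OF Q] by blast
  define c where "c = (\<Sum>v\<in>stab. f v)"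
  have "Q = op_mult d n stab_proj Q" using sub by simp
  also have "\<dots> = op_smult c stab_proj" unfolding f c_def by (rule stab_comb_mult_left)
  finally have Qc: "Q = op_smult c stab_proj" .
  have "op_mult d n Q Q = Q" using sub by (simp add: is_projection_def)
  then have cc: "op_smult (c * c) stab_proj = op_smult c stab_proj"
    by (simp add: Qc op_mult_smult_left op_mult_smult_right stab_proj_idem op_smult_smult)
  obtain x y where "stab_proj x y \<noteq> 0" using stab_proj_nonzero by (meson ext)
  moreover have "c * c * stab_proj x y = c * stab_proj x y"
    using fun_cong[OF fun_cong[OF cc, of x], of y] by (simp add: op_smult_def)
  ultimately have "c * (c - 1) = 0" by (simp add: algebra_simps)
  then show "Q = (\<lambda>x y. 0) \<or> Q = stab_proj" by (auto simp: Qc op_smult_def)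
qed

lemma card_stab: "\<exists>r \<le> n. card stab = d ^ r"
proof -
  have "card stab dvd d ^ (2 * n)"
    using vzero_stab vadd_stab vneg_stab stab_Vn by (intro card_phase_subgroup_dvd[OF d_pos]) auto
  then obtain r where r: "card stab = d ^ r" using divides_primepow_nat[OF prime] by blast
  have "1 \<le> Re (op_trace d n stab_proj)"
    by (rule projection_trace_ge_1[OF is_projection_stab_proj stab_proj_nonzero])
  then have "1 \<le> real (d ^ n) / real (d ^ r)" by (simp add: op_trace_stab_proj r)
  then have "real (d ^ r) \<le> real (d ^ n)" using d_pos by (simp add: divide_simps del: of_nat_power)
  then have "d ^ r \<le> d ^ n" by (simp only: of_nat_le_iff)
  then have "r \<le> n" using power_le_imp_le_exp[OF prime_gt_1_nat[OF prime]] by blast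
  with r show ?thesis by blast
qed

lemma mean_state_eq_stab_proj:
  "mean_state d n \<rho> = op_smult (of_nat (card stab) / of_nat d ^ n) stab_proj"
proof (intro ext)
  fix x y
  have "mean_state d n \<rho> x y = 1 / of_nat d ^ n * (\<Sum>v\<in>stab. stab_weyl v x y)"
    unfolding mean_state_def charfun_unimodular_eq_stab
    by (simp add: stab_weyl_def op_smult_def charfun_eq_cnj_expect[OF stab_Vn] cong: sum.cong)
  also have "\<dots> = op_smult (of_nat (card stab) / of_nat d ^ n) stab_proj x y"
    using card_stab_pos by (simp add: stab_proj_def op_smult_def op_sum_def)
  finally show "mean_state d n \<rho> x y = op_smult (of_nat (card stab) / of_nat d ^ n) stab_proj x y" .
qed

end

theorem mainTheorem1:
  fixes d n :: nat and \<rho> :: qop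
  assumes "prime d" and "n \<ge> 1" and "is_state d n \<rho>"
  defines "S \<equiv> {v \<in> Vn d n. cmod (charfun d n \<rho> v) = 1}"
  shows "vzero n \<in> S \<and> (\<forall>u\<in>S. \<forall>v\<in>S. vadd d u v \<in> S) \<and> (\<forall>u\<in>S. vneg d u \<in> S) \<and>
    (\<exists>r::nat. r \<le> n \<and> card S = d ^ r \<and>
      (\<forall>u\<in>S. \<forall>v\<in>S. op_mult d n (weyl d n u) (weyl d n v) = op_mult d n (weyl d n v) (weyl d n u)) \<and>
      (\<exists>P. minimal_projection d n (cstar_gen d n (weyl d n ` S)) P \<and>
           mean_state d n \<rho> = op_smult (1 / of_nat d ^ (n - r)) P))"
proof -
  interpret stabilized_state d n \<rho> using assms(1,3) by unfold_locales
  have S: "S = stab" unfolding S_def by (rule charfun_unimodular_eq_stab)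
  obtain r where r: "r \<le> n" "card stab = d ^ r" using card_stab by blast
  have "of_nat (card stab) / of_nat d ^ n = (1 / of_nat d ^ (n - r) :: complex)"
    using r d_pos by (simp add: power_diff)
  then have "mean_state d n \<rho> = op_smult (1 / of_nat d ^ (n - r)) stab_proj"
    using mean_state_eq_stab_proj by simp
  then show ?thesis
    unfolding S using vzero_stab vadd_stab vneg_stab r weyl_commute minimal_projection_stab_proj
    by blast
qed

end
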